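(* Let $D$ be a digraph whose vertex set $V$ is a finite subset of $\mathbb{Z}_{>0}$, and let $\overline{D}$ be its complement. Then $\omega\,\Xi_D(\mathbf{x},t)=\Xi_{\overline{D}}(\mathbf{x},t)$.
   Context: A digraph is a finite directed graph without loops or multiple edges (both $u\to v$ and $v\to u$ may be present). The complement $\overline{D}$ has the same vertices and an edge $u\to v$ ($u\ne v$) iff $D$ has no edge $u\to v$. A composition $\beta=(\beta_1,\dots,\beta_\ell)$ of $n$ is a sequence of positive integers summing to $n$; it is identified with the set of "bars" $\{\beta_1,\beta_1+\beta_2,\dots,\beta_1+\cdots+\beta_{\ell-1}\}\subseteq[n-1]$; $\alpha\le\beta$ means the bar set of $\alpha$ is contained in that of $\beta$. The monomial quasisymmetric function is $M_\beta=\sum_{i_1<\cdots<i_\ell}x_{i_1}^{\beta_1}\cdots x_{i_\ell}^{\beta_\ell}$. The linear map $\omega$ on quasisymmetric functions of degree $n$ (extended coefficientwise to coefficients in $\mathbb{Z}[t]$) is $\omega M_\beta=(-1)^{n-\ell(\beta)}\sum_{\alpha\le\beta}M_\alpha$. Let $n=|V|$. A sequencing is a bijection $q:[n]\to V$. An ordered path cover of $D$ is a pair $(q,\beta)$ with $q$ a sequencing and $\beta$ a composition of $n$ such that, with $B_i=\beta_1+\cdots+\beta_i$ ($B_0=0$), $q(B_{i-1}+1)\to q(B_{i-1}+2)\to\cdots\to q(B_i)$ is a directed path in $D$ for every $i$. $\mathrm{asc}(q)$ is the number of pairs $\{u,v\}$ of vertices such that (1) either both $u\to v$ and $v\to u$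 are edges of $D$ or neither is, (2) $u<v$, and (3) $v$ appears later than $u$ in $q$. Then $\Xi_D(\mathbf{x},t)=\sum_{(q,\beta)}t^{\mathrm{asc}(q)}M_\beta$, summed over ordered path covers of $D$. *)

theory Defs
  imports "HOL-Computational_Algebra.Polynomial"
begin

definition is_comp :: "nat \<Rightarrow> nat list \<Rightarrow> bool" where
  "is_comp n \<beta> \<longleftrightarrow> (\<forall>b\<in>set \<beta>. 0 < b) \<and> sum_list \<beta> = n"

definition bars :: "nat list \<Rightarrow> nat set" where
  "bars \<beta> = {sum_list (take i \<beta>) | i. 1 \<le> i \<and> i < length \<beta>}"

definition comp_le :: "nat list \<Rightarrow> nat list \<Rightarrow> bool" where
  "comp_le \<alpha> \<beta> \<longleftrightarrow> bars \<alpha> \<subseteq> bars \<beta>"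

text \<open>A quasisymmetric function of degree n with coefficients in Z[t] is represented by its
  coefficient family in the monomial basis: f represents the sum over compositions beta of n
  of (f beta) * M_beta. (Values on non-compositions are irrelevant and kept 0.)\<close>
type_synonym qsym = "nat list \<Rightarrow> int poly"

text \<open>omega M_beta = (-1)^(n - l(beta)) * sum over alpha \<le> beta of M_alpha, extended linearly;
  the coefficient of M_alpha in omega(sum_beta c_beta M_beta) is
  sum over beta \<ge> alpha of (-1)^(n - l(beta)) c_beta.\<close>
definition omega :: "nat \<Rightarrow> qsym \<Rightarrow> qsym" where
  "omega n f \<alpha> = (if is_comp n \<alpha> then
      (\<Sum>\<beta>\<in>{\<beta>. is_comp n \<beta> \<and> comp_le \<alpha> \<beta>}. (-1) ^ (n - length \<beta>) * f \<beta>)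
    else 0)"

definition digraph :: "nat set \<Rightarrow> (nat \<times> nat) set \<Rightarrow> bool" where
  "digraph V E \<longleftrightarrow> finite V \<and> E \<subseteq> V \<times> V \<and> (\<forall>v. (v, v) \<notin> E)"

definition dcompl :: "nat set \<Rightarrow> (nat \<times> nat) set \<Rightarrow> (nat \<times> nat) set" where
  "dcompl V E = {(u, v). u \<in> V \<and> v \<in> V \<and> u \<noteq> v \<and> (u, v) \<notin> E}"

text \<open>Sequencings q : [n] \<rightarrow> V (bijections) are represented as lists qs with q(i) = qs ! (i-1).\<close>
definition sequencings :: "nat set \<Rightarrow> nat list set" where
  "sequencings V = {qs. distinct qs \<and> set qs = V}"

definition path_cover :: "nat set \<Rightarrow> (nat \<times> nat) set \<Rightarrow> nat list \<Rightarrow> nat list \<Rightarrow> bool" where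
  "path_cover V E qs \<beta> \<longleftrightarrow> qs \<in> sequencings V \<and> is_comp (card V) \<beta> \<and>
     (\<forall>j. 1 \<le> j \<and> j < card V \<and> j \<notin> bars \<beta> \<longrightarrow> (qs ! (j - 1), qs ! j) \<in> E)"

definition asc :: "nat set \<Rightarrow> (nat \<times> nat) set \<Rightarrow> nat list \<Rightarrow> nat" where
  "asc V E qs = card {(u, v). u \<in> V \<and> v \<in> V \<and> ((u, v) \<in> E \<longleftrightarrow> (v, u) \<in> E) \<and> u < v \<and>
      (\<exists>i j. i < j \<and> j < length qs \<and> qs ! i = u \<and> qs ! j = v)}"

definition Xi :: "nat set \<Rightarrow> (nat \<times> nat) set \<Rightarrow> qsym" where
  "Xi V E \<beta> = (\<Sum>qs\<in>{qs. path_cover V E qs \<beta>}. monom 1 (asc V E qs))"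

end

(* The bars identify compositions of n with subsets of {1,...,n-1}, and under this identification
   omega is an alternating sum over supersets.  For a fixed sequencing q, (q, beta) is a path cover
   of D exactly when the bars of beta contain the set N of positions at which q does not follow an
   edge of D.  Hence the coefficient of M_alpha contributed by q to omega Xi_D is the alternating
   sum over all bar sets containing bars alpha \<union> N, which is 1 if bars alpha \<union> N is everything
   and 0 otherwise; and bars alpha \<union> N = {1,...,n-1} says precisely that (q, alpha) is a path
   cover of the complement.  The statistic asc is unchanged by complementation, since it only asks
   whether u and v are joined in both directions or in neither. *)

theory Submission
  imports Defs
begin

fun partial_sums :: "nat \<Rightarrow> nat list \<Rightarrow> nat list" where
  "partial_sums a [] = []"
| "partial_sums a (b # bs) = (a + b) # partial_sums (a + b) bs"

fun successive_diffs :: "nat \<Rightarrow> nat list \<Rightarrow> nat list" where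
  "successive_diffs a [] = []"
| "successive_diffs a (y # ys) = (y - a) # successive_diffs y ys"

lemma length_partial_sums [simp]: "length (partial_sums a bs) = length bs"
  by (induction bs arbitrary: a) auto

lemma nth_partial_sums:
  "i < length bs \<Longrightarrow> partial_sums a bs ! i = a + sum_list (take (Suc i) bs)"
  by (induction bs arbitrary: a i) (auto simp: nth_Cons split: nat.splits)

lemma successive_diffs_partial_sums [simp]: "successive_diffs a (partial_sums a bs) = bs"
  by (induction bs arbitrary: a) auto

lemma partial_sums_successive_diffs:
  "sorted (a # ys) \<Longrightarrow> partial_sums a (successive_diffs a ys) = ys"
  by (induction ys arbitrary: a) auto

lemma successive_diffs_pos: "sorted_wrt (<) (a # ys) \<Longrightarrow> b \<in> set (successive_diffs a ys) \<Longrightarrow> 0 < b"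
  by (induction ys arbitrary: a) auto

lemma sorted_partial_sums:
  "(\<And>b. b \<in> set bs \<Longrightarrow> 0 < b) \<Longrightarrow> sorted_wrt (<) (a # partial_sums a bs)"
proof (induction bs arbitrary: a)
  case (Cons b bs)
  then have "sorted_wrt (<) ((a + b) # partial_sums (a + b) bs)" by simp
  with Cons.prems show ?case by auto
qed simp

lemma last_partial_sums: "bs \<noteq> [] \<Longrightarrow> last (partial_sums a bs) = a + sum_list bs"
  by (induction bs arbitrary: a rule: induct_list012) simp_all

lemma bars_eq_butlast_partial_sums: "bars bs = set (butlast (partial_sums 0 bs))"
proof -
  have "set (butlast (partial_sums 0 bs)) = (\<lambda>j. partial_sums 0 bs ! j) ` {..<length bs - 1}"
    by (force simp: set_conv_nth nth_butlast)
  also have "\<dots> = (\<lambda>j. sum_list (take (Suc j) bs)) ` {..<length bs - 1}"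
    by (rule image_cong) (simp_all add: nth_partial_sums)
  also have "\<dots> = (\<lambda>i. sum_list (take i bs)) ` {1..<length bs}"
    by (cases bs) (simp_all add: lessThan_atLeast0 image_image flip: image_Suc_atLeastLessThan)
  also have "\<dots> = bars bs"
    by (auto simp: bars_def)
  finally show ?thesis ..
qed

lemma is_comp_Nil_iff: "is_comp n \<beta> \<Longrightarrow> \<beta> = [] \<longleftrightarrow> n = 0"
  by (cases \<beta>) (auto simp: is_comp_def)

lemma is_comp_0_iff: "is_comp 0 \<beta> \<longleftrightarrow> \<beta> = []"
  by (cases \<beta>) (auto simp: is_comp_def)

lemma bars_Nil [simp]: "bars [] = {}"
  by (simp add: bars_def)

context
  fixes n :: nat and \<beta> :: "nat list"
  assumes comp: "is_comp n \<beta>" and nonempty: "\<beta> \<noteq> []"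
begin

lemma sorted_partial_sums_comp: "sorted_wrt (<) (0 # partial_sums 0 \<beta>)"
  using comp by (intro sorted_partial_sums) (auto simp: is_comp_def)

lemma partial_sums_comp_eq: "partial_sums 0 \<beta> = butlast (partial_sums 0 \<beta>) @ [n]"
proof -
  have "partial_sums 0 \<beta> \<noteq> []"
    using nonempty by (metis length_0_conv length_partial_sums)
  then have "butlast (partial_sums 0 \<beta>) @ [last (partial_sums 0 \<beta>)] = partial_sums 0 \<beta>"
    by (rule append_butlast_last_id)
  moreover have "last (partial_sums 0 \<beta>) = n"
    using comp nonempty by (simp add: last_partial_sums is_comp_def)
  ultimately show ?thesis by simp
qed

lemma sorted_bars_comp: "sorted_list_of_set (bars \<beta>) = butlast (partial_sums 0 \<beta>)"
proof -
  have "sorted_wrt (<) (butlast (partial_sums 0 \<beta>))"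
    using sorted_partial_sums_comp by (simp add: butlast_conv_take)
  then show ?thesis
    by (simp add: bars_eq_butlast_partial_sums sorted_list_of_set.idem_if_sorted_distinct
        strict_sorted_iff)
qed

lemma length_comp: "length \<beta> = Suc (card (bars \<beta>))"
  using arg_cong[OF sorted_bars_comp, of length] nonempty by simp

lemma successive_diffs_bars_comp: "successive_diffs 0 (sorted_list_of_set (bars \<beta>) @ [n]) = \<beta>"
proof -
  have "sorted_list_of_set (bars \<beta>) @ [n] = partial_sums 0 \<beta>"
    by (simp only: sorted_bars_comp) (rule partial_sums_comp_eq[symmetric])
  then show ?thesis by simp
qed

end

lemma bars_comp_subset: "is_comp n \<beta> \<Longrightarrow> bars \<beta> \<subseteq> {1..<n}"
proof (cases "\<beta> = []")
  case False
  assume comp: "is_comp n \<beta>"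
  show "bars \<beta> \<subseteq> {1..<n}"
  proof
    fix x assume "x \<in> bars \<beta>"
    then have "x \<in> set (butlast (partial_sums 0 \<beta>))"
      by (simp add: bars_eq_butlast_partial_sums)
    moreover have "sorted_wrt (<) (0 # butlast (partial_sums 0 \<beta>) @ [n])"
      using sorted_partial_sums_comp[OF comp False] partial_sums_comp_eq[OF comp False] by metis
    ultimately show "x \<in> {1..<n}"
      by (auto simp: sorted_wrt_append)
  qed
qed simp

lemma comp_successive_diffs:
  assumes "0 < n" and "S \<subseteq> {1..<n}"
  defines "\<beta> \<equiv> successive_diffs 0 (sorted_list_of_set S @ [n])"
  shows "is_comp n \<beta>" and "bars \<beta> = S"
proof -
  have "finite S" using assms(2) finite_subset by blast
  then have S_list: "set (sorted_list_of_set S) = S" "sorted_wrt (<) (sorted_list_of_set S)"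
    by auto
  then have sorted: "sorted_wrt (<) (0 # sorted_list_of_set S @ [n])"
    using assms(1,2) by (auto simp: sorted_wrt_append)
  then have sums: "partial_sums 0 \<beta> = sorted_list_of_set S @ [n]"
    unfolding \<beta>_def by (intro partial_sums_successive_diffs) (simp add: strict_sorted_iff)
  have "\<beta> \<noteq> []"
    using sums by auto
  then have "sum_list \<beta> = n"
    using last_partial_sums[of \<beta> 0] sums by simp
  moreover have "\<forall>b\<in>set \<beta>. 0 < b"
    unfolding \<beta>_def using sorted by (blast intro: successive_diffs_pos)
  ultimately show "is_comp n \<beta>"
    by (simp add: is_comp_def)
  show "bars \<beta> = S"
    using sums S_list by (simp add: bars_eq_butlast_partial_sums)
qed

lemma bij_betw_bars_comps: "bij_betw bars {\<beta>. is_comp n \<beta>} (Pow {1..<n})"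
proof (cases "n = 0")
  case True
  then show ?thesis
    by (simp add: is_comp_0_iff bij_betw_def)
next
  case False
  then have "\<beta> \<noteq> []" and "bars \<beta> \<in> Pow {1..<n}" if "is_comp n \<beta>" for \<beta>
    using that is_comp_Nil_iff bars_comp_subset by blast+
  with False show ?thesis
    by (intro bij_betw_byWitness[where f' = "\<lambda>S. successive_diffs 0 (sorted_list_of_set S @ [n])"])
      (auto simp: successive_diffs_bars_comp comp_successive_diffs)
qed

lemma diff_length_comp: "is_comp n \<beta> \<Longrightarrow> n - length \<beta> = card {1..<n} - card (bars \<beta>)"
  by (cases "n = 0") (auto simp: is_comp_0_iff is_comp_Nil_iff length_comp)

lemma sum_supersets_alternating:
  assumes "finite U" and "T \<subseteq> U"
  shows "(\<Sum>S | S \<subseteq> U \<and> T \<subseteq> S. (-1::'a::ring_1) ^ (card U - card S))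
    = (if T = U then 1 else 0)"
proof (cases "T = U")
  case True
  then have "{S. S \<subseteq> U \<and> T \<subseteq> S} = {U}" by auto
  with True show ?thesis by simp
next
  case False
  have "(\<Sum>S | S \<subseteq> U \<and> T \<subseteq> S. (-1::'a) ^ (card U - card S))
      = (\<Sum>S | S \<subseteq> U \<and> T \<subseteq> S. (-1) ^ card U * (-1) ^ card S)"
    using assms(1) by (intro sum.cong)
      (auto simp: card_mono neg_one_power_add_eq_neg_one_power_diff simp flip: power_add)
  also have "\<dots> = (-1) ^ card U * (\<Sum>S | S \<subseteq> U \<and> T \<subseteq> S. (-1) ^ card S)"
    by (simp add: sum_distrib_left)
  also have "(\<Sum>S | S \<subseteq> U \<and> T \<subseteq> S. (-1::'a) ^ card S) = 0"
  proof (rule sum_alternating_cancels)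
    show "finite {S. S \<subseteq> U \<and> T \<subseteq> S}"
      using assms(1) by simp
    show "card {S \<in> {S. S \<subseteq> U \<and> T \<subseteq> S}. even (card S)}
        = card {S \<in> {S. S \<subseteq> U \<and> T \<subseteq> S}. odd (card S)}"
      using card_subsupersets_even_odd[OF assms(1)] assms(2) False by (simp add: psubset_eq)
  qed
  finally show ?thesis
    using False by simp
qed

lemma sum_comps_alternating:
  assumes "T \<subseteq> {1..<n}"
  shows "(\<Sum>\<beta> | is_comp n \<beta> \<and> T \<subseteq> bars \<beta>. (-1::'a::ring_1) ^ (n - length \<beta>))
    = (if T = {1..<n} then 1 else 0)"
proof -
  have bij: "bij_betw bars {\<beta>. is_comp n \<beta> \<and> T \<subseteq> bars \<beta>} {S. S \<subseteq> {1..<n} \<and> T \<subseteq> S}"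
    using bij_betw_Collect[OF bij_betw_bars_comps, where Q = "\<lambda>S. T \<subseteq> S"] by (simp add: Pow_def)
  have "(\<Sum>\<beta> | is_comp n \<beta> \<and> T \<subseteq> bars \<beta>. (-1::'a) ^ (n - length \<beta>))
      = (\<Sum>\<beta> | is_comp n \<beta> \<and> T \<subseteq> bars \<beta>. (-1) ^ (card {1..<n} - card (bars \<beta>)))"
    by (intro sum.cong) (simp_all add: diff_length_comp)
  also have "\<dots> = (\<Sum>S | S \<subseteq> {1..<n} \<and> T \<subseteq> S. (-1) ^ (card {1..<n} - card S))"
    by (rule sum.reindex_bij_betw[OF bij])
  also have "\<dots> = (if T = {1..<n} then 1 else 0)"
    using assms by (intro sum_supersets_alternating) simp_all
  finally show ?thesis .
qed

(* Positions are 1-based, as in path_cover: j is a non-edge position if q(j) \<rightarrow> q(j+1) is not an edge. *)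
definition non_edge_positions :: "(nat \<times> nat) set \<Rightarrow> nat list \<Rightarrow> nat set" where
  "non_edge_positions E qs = {j. 1 \<le> j \<and> j < length qs \<and> (qs ! (j - 1), qs ! j) \<notin> E}"

lemma finite_sequencings: "finite V \<Longrightarrow> finite (sequencings V)"
  unfolding sequencings_def
  by (rule finite_subset[OF _ finite_subset_distinct]) auto

lemma length_sequencing: "qs \<in> sequencings V \<Longrightarrow> length qs = card V"
  unfolding sequencings_def using distinct_card by fastforce

lemma path_cover_iff_non_edge_positions:
  "qs \<in> sequencings V \<Longrightarrow>
    path_cover V E qs \<beta> \<longleftrightarrow> is_comp (card V) \<beta> \<and> non_edge_positions E qs \<subseteq> bars \<beta>"
  by (auto simp: path_cover_def non_edge_positions_def length_sequencing)

lemma path_cover_dcompl_iff: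
  assumes qs: "qs \<in> sequencings V" and comp: "is_comp (card V) \<alpha>"
  shows "path_cover V (dcompl V E) qs \<alpha> \<longleftrightarrow> bars \<alpha> \<union> non_edge_positions E qs = {1..<card V}"
proof -
  have "(qs ! (j - 1), qs ! j) \<in> dcompl V E \<longleftrightarrow> (qs ! (j - 1), qs ! j) \<notin> E"
    if "1 \<le> j" "j < card V" for j
  proof -
    have "j - 1 < length qs" "j < length qs" "j - 1 \<noteq> j"
      using that length_sequencing[OF qs] by auto
    with qs have "qs ! (j - 1) \<in> V" "qs ! j \<in> V" "qs ! (j - 1) \<noteq> qs ! j"
      by (auto simp: sequencings_def nth_eq_iff_index_eq)
    then show ?thesis by (simp add: dcompl_def)
  qed
  then have "path_cover V (dcompl V E) qs \<alpha> \<longleftrightarrow> {1..<card V} \<subseteq> bars \<alpha> \<union> non_edge_positions E qs"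
    using qs comp by (auto simp: path_cover_def non_edge_positions_def length_sequencing)
  also have "\<dots> \<longleftrightarrow> bars \<alpha> \<union> non_edge_positions E qs = {1..<card V}"
    using bars_comp_subset[OF comp] length_sequencing[OF qs] by (auto simp: non_edge_positions_def)
  finally show ?thesis .
qed

lemma asc_dcompl: "asc V (dcompl V E) qs = asc V E qs"
proof -
  have "((u, v) \<in> dcompl V E \<longleftrightarrow> (v, u) \<in> dcompl V E) \<longleftrightarrow> ((u, v) \<in> E \<longleftrightarrow> (v, u) \<in> E)"
    if "u \<in> V" "v \<in> V" "u < v" for u v
    using that by (auto simp: dcompl_def)
  then show ?thesis
    unfolding asc_def by (intro arg_cong[where f = card]) blast
qed

lemma Xi_eq_sum_sequencings:
  assumes "finite V"
  shows "Xi V E \<beta> = (\<Sum>qs\<in>sequencings V. if path_cover V E qs \<beta> then monom 1 (asc V E qs) else 0)"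
proof -
  have "{qs. path_cover V E qs \<beta>} = {qs \<in> sequencings V. path_cover V E qs \<beta>}"
    by (auto simp: path_cover_def)
  then show ?thesis
    by (simp add: Xi_def sum.inter_filter finite_sequencings[OF assms])
qed

lemma sum_path_covers_alternating:
  assumes qs: "qs \<in> sequencings V" and comp: "is_comp (card V) \<alpha>"
  shows "(\<Sum>\<beta> | is_comp (card V) \<beta> \<and> comp_le \<alpha> \<beta> \<and> path_cover V E qs \<beta>.
      (-1::'a::ring_1) ^ (card V - length \<beta>))
    = (if path_cover V (dcompl V E) qs \<alpha> then 1 else 0)"
proof -
  let ?T = "bars \<alpha> \<union> non_edge_positions E qs"
  have covers: "{\<beta>. is_comp (card V) \<beta> \<and> comp_le \<alpha> \<beta> \<and> path_cover V E qs \<beta>}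
      = {\<beta>. is_comp (card V) \<beta> \<and> ?T \<subseteq> bars \<beta>}"
    using qs by (auto simp: comp_le_def path_cover_iff_non_edge_positions)
  have "?T \<subseteq> {1..<card V}"
    using bars_comp_subset[OF comp] length_sequencing[OF qs] by (auto simp: non_edge_positions_def)
  then have "(\<Sum>\<beta> | is_comp (card V) \<beta> \<and> ?T \<subseteq> bars \<beta>. (-1::'a) ^ (card V - length \<beta>))
      = (if ?T = {1..<card V} then 1 else 0)"
    by (rule sum_comps_alternating)
  then show ?thesis
    unfolding covers path_cover_dcompl_iff[OF qs comp] .
qed

theorem theorem3p8:
  fixes V :: "nat set" and E :: "(nat \<times> nat) set"
  assumes "digraph V E" and "0 \<notin> V"
  shows "omega (card V) (Xi V E) = Xi V (dcompl V E)"
proof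
  fix \<alpha>
  have fin: "finite V"
    using assms(1) by (simp add: digraph_def)
  show "omega (card V) (Xi V E) \<alpha> = Xi V (dcompl V E) \<alpha>"
  proof (cases "is_comp (card V) \<alpha>")
    case False
    then show ?thesis by (simp add: omega_def Xi_def path_cover_def)
  next
    case comp: True
    let ?C = "{\<beta>. is_comp (card V) \<beta> \<and> comp_le \<alpha> \<beta>}"
    let ?sign = "\<lambda>\<beta>. (-1::int poly) ^ (card V - length \<beta>)"
    have "finite ?C"
      using bij_betw_finite[OF bij_betw_bars_comps] by (simp add: finite_subset)
    have "omega (card V) (Xi V E) \<alpha> = (\<Sum>\<beta>\<in>?C. ?sign \<beta> * Xi V E \<beta>)"
      using comp by (simp add: omega_def)
    also have "\<dots> = (\<Sum>\<beta>\<in>?C. \<Sum>qs\<in>sequencings V.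
        (if path_cover V E qs \<beta> then ?sign \<beta> else 0) * monom 1 (asc V E qs))"
      by (auto simp: Xi_eq_sum_sequencings[OF fin] sum_distrib_left intro!: sum.cong)
    also have "\<dots> = (\<Sum>qs\<in>sequencings V.
        (\<Sum>\<beta>\<in>?C. if path_cover V E qs \<beta> then ?sign \<beta> else 0) * monom 1 (asc V E qs))"
      by (simp add: sum_distrib_right sum.swap[of _ ?C])
    also have "\<dots> = (\<Sum>qs\<in>sequencings V.
        (if path_cover V (dcompl V E) qs \<alpha> then 1 else 0) * monom 1 (asc V (dcompl V E) qs))"
      using \<open>finite ?C\<close> comp
      by (intro sum.cong) (simp_all add: asc_dcompl sum_path_covers_alternating flip: sum.inter_filter)
    also have "\<dots> = Xi V (dcompl V E) \<alpha>"
      by (auto simp: Xi_eq_sum_sequencings[OF fin] intro!: sum.cong)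
    finally show ?thesis .
  qed
qed

end
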